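(* Let $H:\overline{Q_T}\times\mathbb{R}\times\mathbb{R}^d\to\mathbb{R}$ be continuous, let $u_0:\mathbb{T}^d\to\mathbb{R}$, and let $u\in\mathcal{C}^1(\overline{Q_T})$. Then $u$ is a classical solution of the initial value problem $\partial_t^\alpha u+H(t,x,u,Du)=0$ in $Q_T$, $u(0,\cdot)=u_0$ on $\mathbb{T}^d$, if and only if $u$ is a viscosity solution of this initial value problem.
   Context: Fix $d\ge1$, $T>0$, $\alpha\in(0,1)$. $\mathbb{T}^d=\mathbb{R}^d/\mathbb{Z}^d$; functions on $[0,T]\times\mathbb{T}^d$ are identified with functions on $[0,T]\times\mathbb{R}^d$ that are $\mathbb{Z}^d$-periodic in $x$. $Q_T=(0,T]\times\mathbb{T}^d$, $\overline{Q_T}=[0,T]\times\mathbb{T}^d$; $D$ is the spatial gradient; $\partial_t^\alpha$ is Caputo's derivative $(\partial_t^\alpha f)(t)=\frac{1}{\Gamma(1-\alpha)}\int_0^t f'(s)(t-s)^{-\alpha}ds$. $\mathcal{C}^1([a,b]\times O)=\{\phi\in C^1((a,b]\times O)\cap C([a,b]\times O):\partial_t\phi(\cdot,x)\in L^1(a,b)\ \forall x\in O\}$ (not required to be differentiable at $t=a$). Classical solution: $u\in\mathcal{C}^1(\overline{Q_T})$ with $u(0,\cdot)=u_0$ and $(\partial_t^\alpha u)(t,x)+H(t,x,u(t,x),Du(t,x))=0$ for all $(t,x)\in Q_T$. For measurable $f(t,x)$, $t\in(0,T]$, $r\in[0,t]$: $J_r[f](t,x)=\frac{\alpha}{\Gamma(1-\alpha)}\int_0^r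 (f(t,x)-f(t-\tau,x))\tau^{-\alpha-1}d\tau$, $K_r[f](t,x)=\frac{f(t,x)-f(0,x)}{t^\alpha\Gamma(1-\alpha)}+\frac{\alpha}{\Gamma(1-\alpha)}\int_r^t (f(t,x)-f(t-\tau,x))\tau^{-\alpha-1}d\tau$ (lower limit $0$: improper integral). Viscosity sub/supersolution: $u\in USC(\overline{Q_T})$ (resp. $LSC$) such that for all $a<b$ in $[0,T]$, every open ball $B\subset\mathbb{R}^d$, every $\phi\in\mathcal{C}^1([0,T]\times\mathbb{R}^d)$ and every $(\hat t,\hat x)\in(a,b]\times B$ where $u-\phi$ attains its maximum (resp. minimum) over $[a,b]\times\overline B$: $J_{\hat t-a}[\phi](\hat t,\hat x)+K_{\hat t-a}[u](\hat t,\hat x)+H(\hat t,\hat x,u(\hat t,\hat x),D\phi(\hat t,\hat x))\le0$ (resp. $\ge0$). A viscosity solution is $u\in C(\overline{Q_T})$ that is both; it is a viscosity solution of the initial value problem if also $u(0,\cdot)=u_0$. *)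

theory Defs
  imports "HOL-Analysis.Analysis"
begin

text \<open>Space variable x :: real^'d (d = CARD('d) \<ge> 1); functions on the torus are
  functions on real^'d that are periodic with respect to Z^d.\<close>

definition periodic_x :: "(real \<Rightarrow> real^'d \<Rightarrow> real) \<Rightarrow> bool" where
  "periodic_x u \<longleftrightarrow> (\<forall>t x i. u t (x + axis i 1) = u t x)"

definition periodic0 :: "(real^'d \<Rightarrow> real) \<Rightarrow> bool" where
  "periodic0 v \<longleftrightarrow> (\<forall>x i. v (x + axis i 1) = v x)"

definition Dx :: "(real \<Rightarrow> real^'d \<Rightarrow> real) \<Rightarrow> real \<Rightarrow> real^'d \<Rightarrow> real^'d" where
  "Dx f t x = (\<chi> i. deriv (\<lambda>h. f t (x + h *\<^sub>R axis i 1)) 0)"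

definition Dt :: "(real \<Rightarrow> real^'d \<Rightarrow> real) \<Rightarrow> real \<Rightarrow> real^'d \<Rightarrow> real" where
  "Dt f t x = deriv (\<lambda>s. f s x) t"

definition C1 :: "real \<Rightarrow> real \<Rightarrow> (real \<Rightarrow> real^'d \<Rightarrow> real) \<Rightarrow> bool" where
  "C1 a b f \<longleftrightarrow>
     continuous_on ({a..b} \<times> UNIV) (\<lambda>(t,x). f t x) \<and>
     (\<exists>ft Df. continuous_on ({a<..b} \<times> UNIV) (\<lambda>(t,x). ft t x) \<and>
              continuous_on ({a<..b} \<times> UNIV) (\<lambda>(t,x). Df t x) \<and>
              (\<forall>t x. t \<in> {a<..b} \<longrightarrow>
                 ((\<lambda>(s,y). f s y) has_derivative (\<lambda>(h,k). h * ft t x + Df t x \<bullet> k))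
                   (at (t,x) within {a<..b} \<times> UNIV))) \<and>
     (\<forall>x. (\<lambda>s. Dt f s x) absolutely_integrable_on {a..b})"

definition caputo :: "real \<Rightarrow> (real \<Rightarrow> real^'d \<Rightarrow> real) \<Rightarrow> real \<Rightarrow> real^'d \<Rightarrow> real" where
  "caputo \<alpha> f t x = 1 / Gamma (1 - \<alpha>) * integral {0..t} (\<lambda>s. Dt f s x * (t - s) powr (-\<alpha>))"

definition Jop :: "real \<Rightarrow> real \<Rightarrow> (real \<Rightarrow> real^'d \<Rightarrow> real) \<Rightarrow> real \<Rightarrow> real^'d \<Rightarrow> real" where
  "Jop \<alpha> r f t x = \<alpha> / Gamma (1 - \<alpha>) *
      integral {0..r} (\<lambda>\<tau>. (f t x - f (t - \<tau>) x) * \<tau> powr (-\<alpha> - 1))"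

definition Kop :: "real \<Rightarrow> real \<Rightarrow> (real \<Rightarrow> real^'d \<Rightarrow> real) \<Rightarrow> real \<Rightarrow> real^'d \<Rightarrow> real" where
  "Kop \<alpha> r f t x = (f t x - f 0 x) / (t powr \<alpha> * Gamma (1 - \<alpha>)) +
      \<alpha> / Gamma (1 - \<alpha>) *
      integral {r..t} (\<lambda>\<tau>. (f t x - f (t - \<tau>) x) * \<tau> powr (-\<alpha> - 1))"

definition usc_on :: "('a::topological_space) set \<Rightarrow> ('a \<Rightarrow> real) \<Rightarrow> bool" where
  "usc_on S f \<longleftrightarrow> (\<forall>p\<in>S. \<forall>e>0. \<forall>\<^sub>F q in at p within S. f q < f p + e)"

definition lsc_on :: "('a::topological_space) set \<Rightarrow> ('a \<Rightarrow> real) \<Rightarrow> bool" where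
  "lsc_on S f \<longleftrightarrow> (\<forall>p\<in>S. \<forall>e>0. \<forall>\<^sub>F q in at p within S. f p - e < f q)"

definition classical_solution ::
  "real \<Rightarrow> real \<Rightarrow> (real \<Rightarrow> real^'d \<Rightarrow> real \<Rightarrow> real^'d \<Rightarrow> real) \<Rightarrow> (real^'d \<Rightarrow> real)
   \<Rightarrow> (real \<Rightarrow> real^'d \<Rightarrow> real) \<Rightarrow> bool" where
  "classical_solution \<alpha> T H u0 u \<longleftrightarrow>
     periodic_x u \<and> C1 0 T u \<and> (\<forall>x. u 0 x = u0 x) \<and>
     (\<forall>t x. t \<in> {0<..T} \<longrightarrow> caputo \<alpha> u t x + H t x (u t x) (Dx u t x) = 0)"

definition viscosity_subsolution ::
  "real \<Rightarrow> real \<Rightarrow> (real \<Rightarrow> real^'d \<Rightarrow> real \<Rightarrow> real^'d \<Rightarrow> real)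
   \<Rightarrow> (real \<Rightarrow> real^'d \<Rightarrow> real) \<Rightarrow> bool" where
  "viscosity_subsolution \<alpha> T H u \<longleftrightarrow>
     periodic_x u \<and> usc_on ({0..T} \<times> UNIV) (\<lambda>(t,x). u t x) \<and>
     (\<forall>a b c \<rho> \<phi> th xh. 0 \<le> a \<and> a < b \<and> b \<le> T \<and> 0 < \<rho> \<and> C1 0 T \<phi> \<and>
        th \<in> {a<..b} \<and> xh \<in> ball c \<rho> \<and>
        (\<forall>s y. s \<in> {a..b} \<and> y \<in> cball c \<rho> \<longrightarrow> u s y - \<phi> s y \<le> u th xh - \<phi> th xh)
        \<longrightarrow> Jop \<alpha> (th - a) \<phi> th xh + Kop \<alpha> (th - a) u th xh + H th xh (u th xh) (Dx \<phi> th xh) \<le> 0)"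

definition viscosity_supersolution ::
  "real \<Rightarrow> real \<Rightarrow> (real \<Rightarrow> real^'d \<Rightarrow> real \<Rightarrow> real^'d \<Rightarrow> real)
   \<Rightarrow> (real \<Rightarrow> real^'d \<Rightarrow> real) \<Rightarrow> bool" where
  "viscosity_supersolution \<alpha> T H u \<longleftrightarrow>
     periodic_x u \<and> lsc_on ({0..T} \<times> UNIV) (\<lambda>(t,x). u t x) \<and>
     (\<forall>a b c \<rho> \<phi> th xh. 0 \<le> a \<and> a < b \<and> b \<le> T \<and> 0 < \<rho> \<and> C1 0 T \<phi> \<and>
        th \<in> {a<..b} \<and> xh \<in> ball c \<rho> \<and>
        (\<forall>s y. s \<in> {a..b} \<and> y \<in> cball c \<rho> \<longrightarrow> u th xh - \<phi> th xh \<le> u s y - \<phi> s y)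
        \<longrightarrow> Jop \<alpha> (th - a) \<phi> th xh + Kop \<alpha> (th - a) u th xh + H th xh (u th xh) (Dx \<phi> th xh) \<ge> 0)"

definition viscosity_solution_ivp ::
  "real \<Rightarrow> real \<Rightarrow> (real \<Rightarrow> real^'d \<Rightarrow> real \<Rightarrow> real^'d \<Rightarrow> real) \<Rightarrow> (real^'d \<Rightarrow> real)
   \<Rightarrow> (real \<Rightarrow> real^'d \<Rightarrow> real) \<Rightarrow> bool" where
  "viscosity_solution_ivp \<alpha> T H u0 u \<longleftrightarrow>
     continuous_on ({0..T} \<times> UNIV) (\<lambda>(t,x). u t x) \<and>
     viscosity_subsolution \<alpha> T H u \<and> viscosity_supersolution \<alpha> T H u \<and>
     (\<forall>x. u 0 x = u0 x)"

end

theory Submission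
  imports Defs
begin

text \<open>For u \<in> C^1 the Caputo derivative splits as J_r[u] + K_r[u] for every r: integrating by
  parts in \<tau> = t - s moves the derivative onto the kernel; since u(t) - u(t - \<tau>) = O(\<tau>), the
  boundary term at \<tau> = 0 vanishes and (u(t) - u(t - \<tau>)) \<tau>^(-\<alpha>-1) is integrable.
  If u - \<phi> is maximal at (t, x) over [a, b] \<times> B, then D\<phi> = Du there and
  \<phi>(t) - \<phi>(t - \<tau>) \<le> u(t) - u(t - \<tau>) for \<tau> \<le> t - a, so J_{t-a}[\<phi>] \<le> J_{t-a}[u] and the
  equation gives the subsolution inequality; minima are symmetric. Conversely, u itself is an
  admissible test function with a = 0, for which J_t[u] + K_t[u] is the Caputo derivative, so
  the two viscosity inequalities together give the equation.\<close>

lemma increment_bounded_near_right_endpoint: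
  fixes v v' :: "real \<Rightarrow> real"
  assumes t: "0 < t" and cv: "continuous_on {0..t} v"
    and dv: "\<And>s. s \<in> {0<..<t} \<Longrightarrow> (v has_real_derivative v' s) (at s)"
    and cv': "continuous_on {0<..t} v'"
  obtains M where "M \<ge> 0" "\<And>\<tau>. \<tau> \<in> {0..t/2} \<Longrightarrow> \<bar>v t - v (t - \<tau>)\<bar> \<le> M * \<tau>"
proof -
  have "compact (v' ` {t/2..t})"
    by (rule compact_continuous_image) (use cv' t in \<open>auto intro: continuous_on_subset\<close>)
  then obtain B where B: "\<And>s. s \<in> {t/2..t} \<Longrightarrow> \<bar>v' s\<bar> \<le> B"
    using compact_imp_bounded bounded_real by (metis image_eqI)
  have bound: "\<bar>v t - v (t - \<tau>)\<bar> \<le> \<bar>B\<bar> * \<tau>" if \<tau>: "\<tau> \<in> {0<..t/2}" for \<tau>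
  proof -
    have "continuous_on {t-\<tau>..t} v" using cv \<tau> by (auto intro: continuous_on_subset)
    moreover have "v differentiable (at s)" if "t - \<tau> < s" "s < t" for s
      using dv[of s] that \<tau> real_differentiable_def by auto
    ultimately obtain l z where z: "t - \<tau> < z" "z < t" "DERIV v z :> l"
      and mvt: "v t - v (t - \<tau>) = \<tau> * l"
      using MVT[of "t - \<tau>" t v] \<tau> by auto
    have "l = v' z" using DERIV_unique z dv[of z] \<tau> by auto
    moreover have "\<bar>v' z\<bar> \<le> \<bar>B\<bar>" using B[of z] z \<tau> by auto
    ultimately show ?thesis using mvt \<tau> by (simp add: abs_mult mult.commute mult_left_mono)
  qed
  show ?thesis
  proof (rule that[of "\<bar>B\<bar>"])
    fix \<tau> assume "\<tau> \<in> {0..t/2}"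
    then show "\<bar>v t - v (t - \<tau>)\<bar> \<le> \<bar>B\<bar> * \<tau>" using bound by (cases "\<tau> = 0") auto
  qed simp
qed

lemma increment_kernel_integrable:
  fixes v v' :: "real \<Rightarrow> real"
  assumes t: "0 < t" and \<alpha>: "0 < \<alpha>" "\<alpha> < 1" and cv: "continuous_on {0..t} v"
    and dv: "\<And>s. s \<in> {0<..<t} \<Longrightarrow> (v has_real_derivative v' s) (at s)"
    and cv': "continuous_on {0<..t} v'"
  shows "(\<lambda>\<tau>. (v t - v (t - \<tau>)) * \<tau> powr (-\<alpha>-1)) integrable_on {0..t}"
proof -
  obtain M where M: "M \<ge> 0" "\<And>\<tau>. \<tau> \<in> {0..t/2} \<Longrightarrow> \<bar>v t - v (t - \<tau>)\<bar> \<le> M * \<tau>"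
    using increment_bounded_near_right_endpoint[OF t cv dv cv'] by blast
  let ?G = "\<lambda>\<tau>. (v t - v (t - \<tau>)) * \<tau> powr (-\<alpha>-1)"
  have "continuous_on {0<..t} (\<lambda>\<tau>. v (t - \<tau>))"
    by (rule continuous_on_compose2[OF cv]) (auto intro!: continuous_intros)
  then have cG: "continuous_on {0<..t} ?G" by (auto intro!: continuous_intros)
  have "?G absolutely_integrable_on {0<..t/2}"
  proof (rule measurable_bounded_by_integrable_imp_absolutely_integrable)
    show "?G \<in> borel_measurable (lebesgue_on {0<..t/2})"
      by (rule continuous_imp_measurable_on_sets_lebesgue)
         (use cG in \<open>auto intro: continuous_on_subset\<close>)
    have "(\<lambda>\<tau>. \<tau> powr (-\<alpha>)) integrable_on {0<..t/2}"
      by (rule integrable_on_powr_from_0') (use \<alpha> t in auto)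
    then show "(\<lambda>\<tau>. M * \<tau> powr (-\<alpha>)) integrable_on {0<..t/2}"
      using integrable_on_cmult_left[of _ _ M] by fastforce
    show "norm (?G \<tau>) \<le> M * \<tau> powr (-\<alpha>)" if "\<tau> \<in> {0<..t/2}" for \<tau>
    proof -
      have "norm (?G \<tau>) = \<bar>v t - v (t - \<tau>)\<bar> * \<tau> powr (-\<alpha>-1)" by (simp add: abs_mult)
      also have "\<dots> \<le> M * \<tau> * \<tau> powr (-\<alpha>-1)"
        using M(2)[of \<tau>] that by (auto intro: mult_right_mono)
      also have "\<dots> = M * \<tau> powr (-\<alpha>)" using that by (simp add: powr_diff powr_minus field_simps)
      finally show ?thesis .
    qed
  qed simp
  then have "?G integrable_on {0<..t/2}" by (simp add: absolutely_integrable_on_def)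
  then have "?G integrable_on {0..t/2}"
    by (rule integrable_spike_set) (auto intro: negligible_subset[of "{0}"])
  moreover have "?G integrable_on {t/2..t}"
    by (rule integrable_continuous_interval) (use cG t in \<open>auto intro: continuous_on_subset\<close>)
  ultimately show ?thesis using Henstock_Kurzweil_Integration.integrable_combine[of 0 "t/2" t] t
    by simp
qed

lemma weighted_increment_continuous:
  fixes v v' :: "real \<Rightarrow> real"
  assumes t: "0 < t" and \<alpha>: "\<alpha> < 1" and cv: "continuous_on {0..t} v"
    and dv: "\<And>s. s \<in> {0<..<t} \<Longrightarrow> (v has_real_derivative v' s) (at s)"
    and cv': "continuous_on {0<..t} v'"
  shows "continuous_on {0..t} (\<lambda>\<tau>. (v t - v (t - \<tau>)) * \<tau> powr (-\<alpha>))"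
    (is "continuous_on _ ?F")
proof -
  obtain M where M: "M \<ge> 0" "\<And>\<tau>. \<tau> \<in> {0..t/2} \<Longrightarrow> \<bar>v t - v (t - \<tau>)\<bar> \<le> M * \<tau>"
    using increment_bounded_near_right_endpoint[OF t cv dv cv'] by blast
  have "continuous_on {0<..t} (\<lambda>\<tau>. v (t - \<tau>))"
    by (rule continuous_on_compose2[OF cv]) (auto intro!: continuous_intros)
  then have pos: "continuous_on {0<..t} ?F" by (auto intro!: continuous_intros)
  have zero: "(?F \<longlongrightarrow> 0) (at 0 within {0..t})"
  proof (rule Lim_null_comparison)
    have "\<forall>\<^sub>F \<tau> in at 0 within {0..t}. \<tau> \<in> {0<..t/2}"
      using t by (auto simp: eventually_at dist_real_def intro!: exI[of _ "t/2"])
    then show "\<forall>\<^sub>F \<tau> in at 0 within {0..t}. norm (?F \<tau>) \<le> M * \<tau> powr (1 - \<alpha>)"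
    proof (rule eventually_mono)
      fix \<tau> :: real assume \<tau>: "\<tau> \<in> {0<..t/2}"
      have "norm (?F \<tau>) = \<bar>v t - v (t - \<tau>)\<bar> * \<tau> powr (-\<alpha>)" by (simp add: abs_mult)
      also have "\<dots> \<le> M * \<tau> * \<tau> powr (-\<alpha>)" using M(2)[of \<tau>] \<tau> by (auto intro: mult_right_mono)
      also have "\<dots> = M * \<tau> powr (1 - \<alpha>)" using \<tau> by (simp add: powr_diff powr_minus field_simps)
      finally show "norm (?F \<tau>) \<le> M * \<tau> powr (1 - \<alpha>)" .
    qed
    have "\<forall>\<^sub>F \<tau> in at 0 within {0..t}. 0 \<le> \<tau>" by (auto simp: eventually_at_filter)
    then have "((\<lambda>\<tau>. \<tau> powr (1 - \<alpha>)) \<longlongrightarrow> 0) (at 0 within {0..t})"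
      by (intro tendsto_zero_powrI[where b="1-\<alpha>"]) (use \<alpha> in \<open>auto intro!: tendsto_ident_at\<close>)
    then show "((\<lambda>\<tau>. M * \<tau> powr (1 - \<alpha>)) \<longlongrightarrow> 0) (at 0 within {0..t})"
      using tendsto_mult_right_zero by blast
  qed
  show ?thesis
  proof (clarsimp simp: continuous_on_eq_continuous_within)
    fix \<tau> :: real assume \<tau>: "0 \<le> \<tau>" "\<tau> \<le> t"
    show "continuous (at \<tau> within {0..t}) ?F"
    proof (cases "\<tau> = 0")
      case True
      then show ?thesis using zero by (simp add: continuous_within)
    next
      case False
      have "at \<tau> within {0..t} = at \<tau> within {0<..t}"
        by (rule at_within_nhd[of _ "{0<..}"]) (use \<tau> False in auto)
      then show ?thesis using pos \<tau> False by (simp add: continuous_on_eq_continuous_within)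
    qed
  qed
qed

lemma caputo_integration_by_parts:
  fixes v v' :: "real \<Rightarrow> real"
  assumes t: "0 < t" and \<alpha>: "0 < \<alpha>" "\<alpha> < 1" and cv: "continuous_on {0..t} v"
    and dv: "\<And>s. s \<in> {0<..<t} \<Longrightarrow> (v has_real_derivative v' s) (at s)"
    and cv': "continuous_on {0<..t} v'"
  shows "((\<lambda>\<tau>. v' (t - \<tau>) * \<tau> powr (-\<alpha>)) has_integral
           (v t - v 0) * t powr (-\<alpha>)
           + \<alpha> * integral {0..t} (\<lambda>\<tau>. (v t - v (t - \<tau>)) * \<tau> powr (-\<alpha>-1))) {0..t}"
proof -
  define G where "G = (\<lambda>\<tau>. (v t - v (t - \<tau>)) * \<tau> powr (-\<alpha>-1))"
  define F where "F = (\<lambda>\<tau>. (v t - v (t - \<tau>)) * \<tau> powr (-\<alpha>))"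
  have dF: "(F has_vector_derivative v' (t - \<tau>) * \<tau> powr (-\<alpha>) - \<alpha> * G \<tau>) (at \<tau>)"
    if \<tau>: "\<tau> \<in> {0<..<t}" for \<tau>
  proof -
    have "(v has_real_derivative v' (t - \<tau>)) (at (t - \<tau>))" using dv[of "t - \<tau>"] \<tau> by auto
    moreover have "((\<lambda>\<tau>. t - \<tau>) has_real_derivative -1) (at \<tau>)"
      by (auto intro!: derivative_eq_intros)
    ultimately have "((\<lambda>\<tau>. v (t - \<tau>)) has_real_derivative v' (t - \<tau>) * (-1)) (at \<tau>)"
      using DERIV_chain2[where f=v and g="\<lambda>\<tau>. t - \<tau>"] by blast
    then have "((\<lambda>\<tau>. v t - v (t - \<tau>)) has_real_derivative v' (t - \<tau>)) (at \<tau>)"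
      using DERIV_diff[OF DERIV_const] by fastforce
    moreover have "((\<lambda>\<tau>. \<tau> powr (-\<alpha>)) has_real_derivative (-\<alpha>) * \<tau> powr (-\<alpha> - 1)) (at \<tau>)"
      using has_real_derivative_powr[of \<tau> "-\<alpha>"] \<tau> by simp
    ultimately have "(F has_real_derivative
        (v t - v (t - \<tau>)) * ((-\<alpha>) * \<tau> powr (-\<alpha> - 1)) + v' (t - \<tau>) * \<tau> powr (-\<alpha>)) (at \<tau>)"
      unfolding F_def by (rule DERIV_mult')
    then show ?thesis
      by (simp add: G_def algebra_simps has_real_derivative_iff_has_vector_derivative)
  qed
  have "((\<lambda>\<tau>. v' (t - \<tau>) * \<tau> powr (-\<alpha>) - \<alpha> * G \<tau>) has_integral F t - F 0) {0..t}"
    by (rule fundamental_theorem_of_calculus_interior)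
       (use t dF weighted_increment_continuous[OF t \<alpha>(2) cv dv cv'] in \<open>auto simp: F_def\<close>)
  moreover have "G integrable_on {0..t}"
    unfolding G_def by (rule increment_kernel_integrable[OF t \<alpha> cv dv cv'])
  ultimately have "((\<lambda>\<tau>. (v' (t - \<tau>) * \<tau> powr (-\<alpha>) - \<alpha> * G \<tau>) + \<alpha> * G \<tau>)
      has_integral (F t - F 0) + \<alpha> * integral {0..t} G) {0..t}"
    by (intro has_integral_add has_integral_mult_right integrable_integral)
  then show ?thesis by (simp add: F_def G_def)
qed

lemma has_integral_reflect_interval:
  fixes g :: "real \<Rightarrow> real"
  assumes "(g has_integral I) {0..t}" "0 \<le> t"
  shows "((\<lambda>s. g (t - s)) has_integral I) {0..t}"
proof -
  have "((\<lambda>s. g ((-1) *\<^sub>R s + t)) has_integral (1 / \<bar>-1\<bar> ^ DIM(real)) *\<^sub>R I)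
          ((\<lambda>s. (1 / (-1)) *\<^sub>R s + -((1 / (-1)) *\<^sub>R t)) ` cbox 0 t)"
    by (rule has_integral_affinity) (use assms in auto)
  moreover have "(\<lambda>s. (1 / (-1)) *\<^sub>R s + -((1 / (-1)) *\<^sub>R t)) ` cbox 0 t = {0..t}"
    by (auto simp: image_iff intro!: bexI[where x="t - _"])
  ultimately show ?thesis by simp
qed

lemma C1_time_derivative:
  assumes "C1 a b f"
  obtains ft where "continuous_on {a..b} (\<lambda>s. f s x)" "continuous_on {a<..b} ft"
    "\<And>s. s \<in> {a<..<b} \<Longrightarrow> ((\<lambda>s. f s x) has_real_derivative ft s) (at s)"
proof -
  from assms obtain ft Df where c: "continuous_on ({a..b} \<times> UNIV) (\<lambda>(t,x). f t x)"
    and cft: "continuous_on ({a<..b} \<times> UNIV) (\<lambda>(t,x). ft t x)"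
    and d: "\<And>t x. t \<in> {a<..b} \<Longrightarrow>
      ((\<lambda>(s,y). f s y) has_derivative (\<lambda>(h,k). h * ft t x + Df t x \<bullet> k)) (at (t,x) within {a<..b} \<times> UNIV)"
    unfolding C1_def by blast
  have "continuous_on {a..b} (\<lambda>s. f s x)"
    by (rule continuous_on_compose2[OF c, of _ "\<lambda>s. (s,x)", simplified]) (auto intro!: continuous_intros)
  moreover have "continuous_on {a<..b} (\<lambda>s. ft s x)"
    by (rule continuous_on_compose2[OF cft, of _ "\<lambda>s. (s,x)", simplified]) (auto intro!: continuous_intros)
  moreover have "((\<lambda>s. f s x) has_real_derivative ft s x) (at s)" if s: "s \<in> {a<..<b}" for s
  proof -
    have "((\<lambda>s. (\<lambda>(s,y). f s y) (s,x)) has_derivative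
          (\<lambda>h. (\<lambda>p (h,k). h * ft (fst p) (snd p) + Df (fst p) (snd p) \<bullet> k) (s,x) (h,0))) (at s within {a<..b})"
    proof (rule has_derivative_in_compose2[where t="{a<..b} \<times> UNIV"])
      show "((\<lambda>(s,y). f s y) has_derivative (\<lambda>p (h,k). h * ft (fst p) (snd p) + Df (fst p) (snd p) \<bullet> k) p)
              (at p within {a<..b} \<times> UNIV)" if "p \<in> {a<..b} \<times> UNIV" for p
        using d[of "fst p" "snd p"] that by (cases p) auto
    qed (use s in \<open>auto intro!: derivative_eq_intros\<close>)
    then have "((\<lambda>s. f s x) has_derivative (\<lambda>h. ft s x * h)) (at s within {a<..b})"
      by (simp add: mult.commute)
    moreover have "at s within {a<..b} = at s"
      by (rule at_within_interior) (use s interior_mono[of "{a<..<b}" "{a<..b}"] in auto)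
    ultimately show ?thesis by (simp add: has_field_derivative_def)
  qed
  ultimately show ?thesis using that by blast
qed

lemma C1_partial_derivative:
  assumes "C1 a b f" "t \<in> {a<..b}"
  shows "((\<lambda>h. f t (x + h *\<^sub>R axis i 1)) has_real_derivative Dx f t x $ i) (at 0)"
proof -
  from assms obtain ft Df where d: "\<And>t x. t \<in> {a<..b} \<Longrightarrow>
      ((\<lambda>(s,y). f s y) has_derivative (\<lambda>(h,k). h * ft t x + Df t x \<bullet> k)) (at (t,x) within {a<..b} \<times> UNIV)"
    unfolding C1_def by blast
  have "((\<lambda>h. (\<lambda>(s,y). f s y) (t, x + h *\<^sub>R axis i 1)) has_derivative
          (\<lambda>h. (\<lambda>p (h,k). h * ft (fst p) (snd p) + Df (fst p) (snd p) \<bullet> k)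
                 (t, x + 0 *\<^sub>R axis i 1) (0, h *\<^sub>R axis i 1))) (at 0 within UNIV)"
  proof (rule has_derivative_in_compose2[where t="{a<..b} \<times> UNIV"])
    show "((\<lambda>(s,y). f s y) has_derivative (\<lambda>p (h,k). h * ft (fst p) (snd p) + Df (fst p) (snd p) \<bullet> k) p)
            (at p within {a<..b} \<times> UNIV)" if "p \<in> {a<..b} \<times> UNIV" for p
      using d[of "fst p" "snd p"] that by (cases p) auto
  qed (use assms in \<open>auto intro!: derivative_eq_intros\<close>)
  then have "((\<lambda>h. f t (x + h *\<^sub>R axis i 1)) has_derivative (\<lambda>h. Df t x $ i * h)) (at 0)"
    by (simp add: inner_axis mult.commute)
  then have D: "((\<lambda>h. f t (x + h *\<^sub>R axis i 1)) has_real_derivative Df t x $ i) (at 0)"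
    by (simp add: has_field_derivative_def)
  then have "Dx f t x $ i = Df t x $ i" by (simp add: Dx_def DERIV_imp_deriv)
  with D show ?thesis by simp
qed

lemma C1_increment_kernel_integrable:
  assumes "C1 0 T f" "0 < t" "t \<le> T" "0 < \<alpha>" "\<alpha> < 1"
  shows "(\<lambda>\<tau>. (f t x - f (t - \<tau>) x) * \<tau> powr (-\<alpha>-1)) integrable_on {0..t}"
proof -
  obtain ft where "continuous_on {0..T} (\<lambda>s. f s x)" "continuous_on {0<..T} ft"
    "\<And>s. s \<in> {0<..<T} \<Longrightarrow> ((\<lambda>s. f s x) has_real_derivative ft s) (at s)"
    using C1_time_derivative[OF assms(1)] by blast
  then show ?thesis
    by (intro increment_kernel_integrable[where v="\<lambda>s. f s x" and v'=ft])
       (use assms in \<open>auto intro: continuous_on_subset\<close>)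
qed

lemma caputo_eq_Jop_plus_Kop:
  assumes "C1 0 T f" "0 < t" "t \<le> T" "0 < \<alpha>" "\<alpha> < 1" "0 \<le> r" "r \<le> t"
  shows "caputo \<alpha> f t x = Jop \<alpha> r f t x + Kop \<alpha> r f t x"
proof -
  obtain ft where c: "continuous_on {0..T} (\<lambda>s. f s x)" "continuous_on {0<..T} ft"
    "\<And>s. s \<in> {0<..<T} \<Longrightarrow> ((\<lambda>s. f s x) has_real_derivative ft s) (at s)"
    using C1_time_derivative[OF assms(1)] by blast
  define G where "G = (\<lambda>\<tau>. (f t x - f (t - \<tau>) x) * \<tau> powr (-\<alpha>-1))"
  define I where "I = (f t x - f 0 x) * t powr (-\<alpha>) + \<alpha> * integral {0..t} G"
  have parts: "((\<lambda>\<tau>. ft (t - \<tau>) * \<tau> powr (-\<alpha>)) has_integral I) {0..t}"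
    unfolding I_def G_def
  proof (rule caputo_integration_by_parts[where v="\<lambda>s. f s x" and v'=ft])
    show "continuous_on {0..t} (\<lambda>s. f s x)" "continuous_on {0<..t} ft"
      using c assms by (auto intro: continuous_on_subset)
  qed (use assms c(3) in auto)
  have "((\<lambda>s. ft s * (t - s) powr (-\<alpha>)) has_integral I) {0..t}"
    using has_integral_reflect_interval[OF parts] assms by simp
  then have "((\<lambda>s. Dt f s x * (t - s) powr (-\<alpha>)) has_integral I) {0..t}"
  proof (rule has_integral_spike_finite[where S="{0,t}", rotated 2])
    fix s assume "s \<in> {0..t} - {0,t}"
    then have "Dt f s x = ft s" unfolding Dt_def by (intro DERIV_imp_deriv c(3)) (use assms in auto)
    then show "Dt f s x * (t - s) powr (-\<alpha>) = ft s * (t - s) powr (-\<alpha>)" by simp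
  qed simp
  then have caputo: "caputo \<alpha> f t x = I / Gamma (1 - \<alpha>)"
    unfolding caputo_def by (simp add: integral_unique)
  have "G integrable_on {0..t}"
    unfolding G_def by (rule C1_increment_kernel_integrable[OF assms(1-5)])
  then have split: "integral {0..r} G + integral {r..t} G = integral {0..t} G"
    by (rule Henstock_Kurzweil_Integration.integral_combine[rotated 2]) (use assms in auto)
  have "t powr \<alpha> > 0" "Gamma (1 - \<alpha>) > 0" using assms by (auto intro: Gamma_real_pos)
  then have "Jop \<alpha> r f t x + Kop \<alpha> r f t x
      = ((f t x - f 0 x) * t powr (-\<alpha>) + \<alpha> * (integral {0..r} G + integral {r..t} G)) / Gamma (1 - \<alpha>)"
    unfolding Jop_def Kop_def G_def by (simp add: powr_minus field_simps)
  then show ?thesis using caputo split by (simp add: I_def)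
qed

lemma Dx_eq_at_spatial_max:
  assumes "C1 a b f" "C1 a b g" "t \<in> {a<..b}" "x \<in> ball c \<rho>"
    and max: "\<And>y. y \<in> cball c \<rho> \<Longrightarrow> f t y - g t y \<le> f t x - g t x"
  shows "Dx f t x = Dx g t x"
proof (subst vec_eq_iff, rule allI)
  fix i
  let ?d = "\<lambda>h. f t (x + h *\<^sub>R axis i 1) - g t (x + h *\<^sub>R axis i 1)"
  have "(?d has_real_derivative Dx f t x $ i - Dx g t x $ i) (at 0)"
    by (intro DERIV_diff C1_partial_derivative[OF assms(1,3)] C1_partial_derivative[OF assms(2,3)])
  moreover have "0 < \<rho> - dist c x" using assms(4) by simp
  moreover have "\<forall>h. \<bar>0 - h\<bar> < \<rho> - dist c x \<longrightarrow> ?d h \<le> ?d 0"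
  proof (intro allI impI)
    fix h :: real assume h: "\<bar>0 - h\<bar> < \<rho> - dist c x"
    have "dist c (x + h *\<^sub>R axis i 1) \<le> dist c x + dist x (x + h *\<^sub>R axis i 1)"
      by (rule dist_triangle)
    also have "dist x (x + h *\<^sub>R axis i 1) = \<bar>h\<bar>" by (simp add: dist_norm)
    finally have "x + h *\<^sub>R axis i 1 \<in> cball c \<rho>" using h by simp
    then show "?d h \<le> ?d 0" using max by simp
  qed
  ultimately have "Dx f t x $ i - Dx g t x $ i = 0" by (rule DERIV_local_max)
  then show "Dx f t x $ i = Dx g t x $ i" by simp
qed

lemma Jop_mono:
  assumes "C1 0 T f" "C1 0 T g" "0 < t" "t \<le> T" "0 < \<alpha>" "\<alpha> < 1" "0 \<le> r" "r \<le> t"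
    and le: "\<And>\<tau>. \<tau> \<in> {0<..r} \<Longrightarrow> f t x - f (t - \<tau>) x \<le> g t x - g (t - \<tau>) x"
  shows "Jop \<alpha> r f t x \<le> Jop \<alpha> r g t x"
proof -
  have integrable: "(\<lambda>\<tau>. (h t x - h (t - \<tau>) x) * \<tau> powr (-\<alpha>-1)) integrable_on {0..r}"
    if "C1 0 T h" for h
    by (rule integrable_on_subinterval[OF C1_increment_kernel_integrable[OF that assms(3-6)]])
       (use assms in auto)
  have "integral {0..r} (\<lambda>\<tau>. (f t x - f (t - \<tau>) x) * \<tau> powr (-\<alpha>-1))
        \<le> integral {0..r} (\<lambda>\<tau>. (g t x - g (t - \<tau>) x) * \<tau> powr (-\<alpha>-1))"
  proof (rule integral_le[OF integrable[OF assms(1)] integrable[OF assms(2)]])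
    fix \<tau> assume "\<tau> \<in> {0..r}"
    then show "(f t x - f (t - \<tau>) x) * \<tau> powr (-\<alpha>-1) \<le> (g t x - g (t - \<tau>) x) * \<tau> powr (-\<alpha>-1)"
      using le[of \<tau>] by (cases "\<tau> = 0") (auto intro: mult_right_mono)
  qed
  moreover have "\<alpha> / Gamma (1 - \<alpha>) \<ge> 0" using assms Gamma_real_pos[of "1 - \<alpha>"] by simp
  ultimately show ?thesis unfolding Jop_def by (rule mult_left_mono)
qed


lemma continuous_on_imp_usc_on: "continuous_on S f \<Longrightarrow> usc_on S f"
  unfolding usc_on_def continuous_on_def by (auto intro: order_tendstoD(2))

lemma continuous_on_imp_lsc_on: "continuous_on S f \<Longrightarrow> lsc_on S f"
  unfolding lsc_on_def continuous_on_def by (auto intro: order_tendstoD(1))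

lemma classical_solution_imp_viscosity_subsolution:
  assumes cl: "classical_solution \<alpha> T H u0 u" and \<alpha>: "0 < \<alpha>" "\<alpha> < 1"
  shows "viscosity_subsolution \<alpha> T H u"
  unfolding viscosity_subsolution_def
proof (intro conjI allI impI)
  have u: "periodic_x u" "C1 0 T u"
    and eq: "\<And>t x. t \<in> {0<..T} \<Longrightarrow> caputo \<alpha> u t x + H t x (u t x) (Dx u t x) = 0"
    using cl by (auto simp: classical_solution_def)
  show "periodic_x u" by fact
  show "usc_on ({0..T} \<times> UNIV) (\<lambda>(t,x). u t x)"
    using u(2) by (intro continuous_on_imp_usc_on) (simp add: C1_def)
  fix a b c \<rho> \<phi> t x
  assume "0 \<le> a \<and> a < b \<and> b \<le> T \<and> 0 < \<rho> \<and> C1 0 T \<phi> \<and> t \<in> {a<..b} \<and> x \<in> ball c \<rho> \<and>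
    (\<forall>s y. s \<in> {a..b} \<and> y \<in> cball c \<rho> \<longrightarrow> u s y - \<phi> s y \<le> u t x - \<phi> t x)"
  then have ab: "0 \<le> a" "a < b" "b \<le> T" "t \<in> {a<..b}" "x \<in> ball c \<rho>" and \<phi>: "C1 0 T \<phi>"
    and max: "\<And>s y. s \<in> {a..b} \<Longrightarrow> y \<in> cball c \<rho> \<Longrightarrow> u s y - \<phi> s y \<le> u t x - \<phi> t x"
    by auto
  have "Dx u t x = Dx \<phi> t x"
    by (rule Dx_eq_at_spatial_max[OF u(2) \<phi>, of t x c \<rho>]) (use ab max in auto)
  moreover have "Jop \<alpha> (t - a) \<phi> t x \<le> Jop \<alpha> (t - a) u t x"
  proof (rule Jop_mono[OF \<phi> u(2)])
    fix \<tau> assume "\<tau> \<in> {0<..t - a}"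
    then show "\<phi> t x - \<phi> (t - \<tau>) x \<le> u t x - u (t - \<tau>) x" using max[of "t - \<tau>" x] ab by auto
  qed (use ab \<alpha> in auto)
  moreover have "caputo \<alpha> u t x = Jop \<alpha> (t - a) u t x + Kop \<alpha> (t - a) u t x"
    by (rule caputo_eq_Jop_plus_Kop[OF u(2)]) (use ab \<alpha> in auto)
  ultimately show "Jop \<alpha> (t - a) \<phi> t x + Kop \<alpha> (t - a) u t x + H t x (u t x) (Dx \<phi> t x) \<le> 0"
    using eq[of t x] ab by auto
qed

lemma classical_solution_imp_viscosity_supersolution:
  assumes cl: "classical_solution \<alpha> T H u0 u" and \<alpha>: "0 < \<alpha>" "\<alpha> < 1"
  shows "viscosity_supersolution \<alpha> T H u"
  unfolding viscosity_supersolution_def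
proof (intro conjI allI impI)
  have u: "periodic_x u" "C1 0 T u"
    and eq: "\<And>t x. t \<in> {0<..T} \<Longrightarrow> caputo \<alpha> u t x + H t x (u t x) (Dx u t x) = 0"
    using cl by (auto simp: classical_solution_def)
  show "periodic_x u" by fact
  show "lsc_on ({0..T} \<times> UNIV) (\<lambda>(t,x). u t x)"
    using u(2) by (intro continuous_on_imp_lsc_on) (simp add: C1_def)
  fix a b c \<rho> \<phi> t x
  assume "0 \<le> a \<and> a < b \<and> b \<le> T \<and> 0 < \<rho> \<and> C1 0 T \<phi> \<and> t \<in> {a<..b} \<and> x \<in> ball c \<rho> \<and>
    (\<forall>s y. s \<in> {a..b} \<and> y \<in> cball c \<rho> \<longrightarrow> u t x - \<phi> t x \<le> u s y - \<phi> s y)"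
  then have ab: "0 \<le> a" "a < b" "b \<le> T" "t \<in> {a<..b}" "x \<in> ball c \<rho>" and \<phi>: "C1 0 T \<phi>"
    and min: "\<And>s y. s \<in> {a..b} \<Longrightarrow> y \<in> cball c \<rho> \<Longrightarrow> u t x - \<phi> t x \<le> u s y - \<phi> s y"
    by auto
  have "Dx \<phi> t x = Dx u t x"
    by (rule Dx_eq_at_spatial_max[OF \<phi> u(2), of t x c \<rho>]) (use ab min in \<open>auto simp: algebra_simps\<close>)
  moreover have "Jop \<alpha> (t - a) u t x \<le> Jop \<alpha> (t - a) \<phi> t x"
  proof (rule Jop_mono[OF u(2) \<phi>])
    fix \<tau> assume "\<tau> \<in> {0<..t - a}"
    then show "u t x - u (t - \<tau>) x \<le> \<phi> t x - \<phi> (t - \<tau>) x" using min[of "t - \<tau>" x] ab by auto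
  qed (use ab \<alpha> in auto)
  moreover have "caputo \<alpha> u t x = Jop \<alpha> (t - a) u t x + Kop \<alpha> (t - a) u t x"
    by (rule caputo_eq_Jop_plus_Kop[OF u(2)]) (use ab \<alpha> in auto)
  ultimately show "Jop \<alpha> (t - a) \<phi> t x + Kop \<alpha> (t - a) u t x + H t x (u t x) (Dx \<phi> t x) \<ge> 0"
    using eq[of t x] ab by auto
qed

lemma viscosity_solution_ivp_imp_classical_solution:
  fixes u :: "real \<Rightarrow> real^'d \<Rightarrow> real"
  assumes v: "viscosity_solution_ivp \<alpha> T H u0 u" and u: "periodic_x u" "C1 0 T u"
    and \<alpha>: "0 < \<alpha>" "\<alpha> < 1"
  shows "classical_solution \<alpha> T H u0 u"
  unfolding classical_solution_def
proof (intro conjI allI impI)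
  show "periodic_x u" "C1 0 T u" by fact+
  show "u 0 x = u0 x" for x using v by (simp add: viscosity_solution_ivp_def)
  fix t and x :: "real^'d" assume t: "t \<in> {0<..T}"
  have test: "(0::real) \<le> 0 \<and> 0 < t \<and> t \<le> T \<and> 0 < (1::real) \<and> C1 0 T u \<and> t \<in> {0<..t} \<and> x \<in> ball x 1"
    using t u by auto
  have sub: "viscosity_subsolution \<alpha> T H u" and sup: "viscosity_supersolution \<alpha> T H u"
    using v by (simp_all add: viscosity_solution_ivp_def)
  have "Jop \<alpha> (t - 0) u t x + Kop \<alpha> (t - 0) u t x + H t x (u t x) (Dx u t x) \<le> 0"
    using sub[unfolded viscosity_subsolution_def, THEN conjunct2, THEN conjunct2, rule_format,
        where a=0 and b=t and c=x and \<rho>=1 and \<phi>=u and th=t and xh=x] test by simp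
  moreover have "Jop \<alpha> (t - 0) u t x + Kop \<alpha> (t - 0) u t x + H t x (u t x) (Dx u t x) \<ge> 0"
    using sup[unfolded viscosity_supersolution_def, THEN conjunct2, THEN conjunct2, rule_format,
        where a=0 and b=t and c=x and \<rho>=1 and \<phi>=u and th=t and xh=x] test by simp
  moreover have "caputo \<alpha> u t x = Jop \<alpha> (t - 0) u t x + Kop \<alpha> (t - 0) u t x"
    by (rule caputo_eq_Jop_plus_Kop[OF u(2)]) (use t \<alpha> in auto)
  ultimately show "caputo \<alpha> u t x + H t x (u t x) (Dx u t x) = 0" by linarith
qed

theorem proposition2p10:
  fixes \<alpha> T :: real
    and H :: "real \<Rightarrow> real^'d \<Rightarrow> real \<Rightarrow> real^'d \<Rightarrow> real"
    and u0 :: "real^'d \<Rightarrow> real"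
    and u :: "real \<Rightarrow> real^'d \<Rightarrow> real"
  assumes "0 < T" and "0 < \<alpha>" and "\<alpha> < 1"
    and "continuous_on ({0..T} \<times> UNIV \<times> UNIV \<times> UNIV) (\<lambda>(t,x,r,p). H t x r p)"
    and "\<forall>t x r p i. H t (x + axis i 1) r p = H t x r p"
    and "periodic0 u0"
    and "periodic_x u" and "C1 0 T u"
  shows "classical_solution \<alpha> T H u0 u \<longleftrightarrow> viscosity_solution_ivp \<alpha> T H u0 u"
proof
  assume cl: "classical_solution \<alpha> T H u0 u"
  have "continuous_on ({0..T} \<times> UNIV) (\<lambda>(t,x). u t x)" using \<open>C1 0 T u\<close> by (simp add: C1_def)
  then show "viscosity_solution_ivp \<alpha> T H u0 u"
    using classical_solution_imp_viscosity_subsolution[OF cl \<open>0 < \<alpha>\<close> \<open>\<alpha> < 1\<close>]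
      classical_solution_imp_viscosity_supersolution[OF cl \<open>0 < \<alpha>\<close> \<open>\<alpha> < 1\<close>] cl
    by (simp add: viscosity_solution_ivp_def classical_solution_def)
next
  assume "viscosity_solution_ivp \<alpha> T H u0 u"
  then show "classical_solution \<alpha> T H u0 u"
    using viscosity_solution_ivp_imp_classical_solution assms by blast
qed

end
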